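(* Let $G$ be a finite group and $p$ a prime dividing $|G|$. If the Sylow $p$-subgroups of $G$ are abelian, then $\mathcal{B}_p(G)\subseteq\mathcal{S}_p(G)$ is a strong deformation retract. Moreover, it is an equivariant strong deformation retract of $\mathcal{S}_p(G)$.
   Context: $\mathcal{S}_p(G)$ is the poset of non-trivial $p$-subgroups of $G$ ordered by inclusion, with $G$ acting by conjugation; $\mathcal{B}_p(G)=\{P\in\mathcal{S}_p(G):P=\mathcal{O}_p(N_G(P))\}$, where $\mathcal{O}_p(H)$ is the largest normal $p$-subgroup of $H$. Finite posets are regarded as finite $T_0$ spaces whose open sets are the down-sets; strong deformation retract refers to this topology, and equivariant means the retraction and homotopy are $G$-equivariant. *)

theory Defs
  imports "HOL-Algebra.Sylow" "HOL-Algebra.Group_Action" "HOL-Analysis.Homotopy"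
begin

definition conj_act :: "('a, 'b) monoid_scheme \<Rightarrow> 'a \<Rightarrow> 'a set \<Rightarrow> 'a set" where
  "conj_act G g H = g <#\<^bsub>G\<^esub> H #>\<^bsub>G\<^esub> inv\<^bsub>G\<^esub> g"

definition p_subgroup :: "('a, 'b) monoid_scheme \<Rightarrow> nat \<Rightarrow> 'a set \<Rightarrow> bool" where
  "p_subgroup G p H \<longleftrightarrow> subgroup H G \<and> finite H \<and> (\<exists>n. card H = p ^ n)"

definition Sp :: "('a, 'b) monoid_scheme \<Rightarrow> nat \<Rightarrow> 'a set set" where
  "Sp G p = {H. p_subgroup G p H \<and> H \<noteq> {\<one>\<^bsub>G\<^esub>}}"

definition sylow_subgroup :: "('a, 'b) monoid_scheme \<Rightarrow> nat \<Rightarrow> 'a set \<Rightarrow> bool" where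
  "sylow_subgroup G p P \<longleftrightarrow> subgroup P G \<and> card P = p ^ multiplicity p (order G)"

definition Op :: "('a, 'b) monoid_scheme \<Rightarrow> nat \<Rightarrow> 'a set \<Rightarrow> 'a set" where
  "Op G p H = (THE Q. p_subgroup G p Q \<and> Q \<lhd> (G\<lparr>carrier := H\<rparr>) \<and>
      (\<forall>Q'. p_subgroup G p Q' \<and> Q' \<lhd> (G\<lparr>carrier := H\<rparr>) \<longrightarrow> Q' \<subseteq> Q))"

definition Bp :: "('a, 'b) monoid_scheme \<Rightarrow> nat \<Rightarrow> 'a set set" where
  "Bp G p = {P \<in> Sp G p. P = Op G p (normalizer G P)}"

section \<open>Finite posets as T0 spaces (open sets = down-sets), ordered by inclusion\<close>

definition is_downset :: "'a set set \<Rightarrow> 'a set set \<Rightarrow> bool" where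
  "is_downset S U \<longleftrightarrow> U \<subseteq> S \<and> (\<forall>x\<in>U. \<forall>y\<in>S. y \<subseteq> x \<longrightarrow> y \<in> U)"

lemma istopology_downset: "istopology (is_downset S)"
  unfolding istopology_def is_downset_def by blast

definition down_topology :: "'a set set \<Rightarrow> 'a set topology" where
  "down_topology S = topology (is_downset S)"

lemma openin_down_topology: "openin (down_topology S) U \<longleftrightarrow> is_downset S U"
  unfolding down_topology_def using istopology_downset topology_inverse' by metis

definition sdr_with :: "(('c \<Rightarrow> 'c) \<Rightarrow> bool) \<Rightarrow> 'c topology \<Rightarrow> 'c set \<Rightarrow> bool" where
  "sdr_with Q X A \<longleftrightarrow> A \<subseteq> topspace X \<and>
     (\<exists>r. continuous_map X (subtopology X A) r \<and> (\<forall>a\<in>A. r a = a) \<and>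
          homotopic_with (\<lambda>k. (\<forall>a\<in>A. k a = a) \<and> Q k) X X id r)"

definition strong_deformation_retract :: "'c topology \<Rightarrow> 'c set \<Rightarrow> bool" where
  "strong_deformation_retract X A \<longleftrightarrow> sdr_with (\<lambda>_. True) X A"

definition equivariant_sdr ::
    "('a, 'b) monoid_scheme \<Rightarrow> 'a set topology \<Rightarrow> 'a set set \<Rightarrow> bool" where
  "equivariant_sdr G X A \<longleftrightarrow>
     sdr_with (\<lambda>k. \<forall>g\<in>carrier G. \<forall>x\<in>topspace X. k (conj_act G g x) = conj_act G g (k x)) X A"

end

theory Submission
  imports Defs
begin

text \<open>For a p-subgroup P let r(P) be the intersection of the Sylow p-subgroups containing P.
  The map r is monotone, satisfies P \<subseteq> r(P), is idempotent and commutes with conjugation.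
  On a finite poset, viewed as a space with the down-sets as open sets, two order-preserving
  maps f \<le> g are homotopic through the homotopy that equals f before time 1 and g at time 1;
  so r is a G-equivariant strong deformation retraction of S_p(G) onto its image.
  If the Sylow p-subgroups are abelian, every Sylow subgroup containing P normalises P and is
  therefore a Sylow subgroup of N_G(P).  A normal p-subgroup of N_G(P) lies in all of them, hence
  in r(P), while r(P) is itself normal in N_G(P); thus r(P) = O_p(N_G(P)) and the image of r
  is exactly B_p(G).\<close>

lemma topspace_down_topology [simp]: "topspace (down_topology S) = S"
proof -
  have "openin (down_topology S) S" by (simp add: openin_down_topology is_downset_def)
  moreover have "U \<subseteq> S" if "openin (down_topology S) U" for U
    using that by (simp add: openin_down_topology is_downset_def)
  ultimately show ?thesis unfolding topspace_def by blast
qed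

lemma is_downset_preimage:
  assumes fT: "\<And>x. x \<in> S \<Longrightarrow> f x \<in> T"
    and f_mono: "\<And>x y. x \<in> S \<Longrightarrow> y \<in> S \<Longrightarrow> x \<subseteq> y \<Longrightarrow> f x \<subseteq> f y"
    and U: "is_downset T U"
  shows "is_downset S {x \<in> S. f x \<in> U}"
  unfolding is_downset_def
proof (intro conjI ballI impI)
  fix x y assume "x \<in> {x \<in> S. f x \<in> U}" "y \<in> S" "y \<subseteq> x"
  then show "y \<in> {x \<in> S. f x \<in> U}"
    using U fT[of y] f_mono[of y x] unfolding is_downset_def by blast
qed auto

lemma continuous_map_down_topology:
  assumes fT: "\<And>x. x \<in> S \<Longrightarrow> f x \<in> T"
    and f_mono: "\<And>x y. x \<in> S \<Longrightarrow> y \<in> S \<Longrightarrow> x \<subseteq> y \<Longrightarrow> f x \<subseteq> f y"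
  shows "continuous_map (down_topology S) (down_topology T) f"
  unfolding continuous_map_def topspace_down_topology openin_down_topology
  using fT is_downset_preimage[of S f T, OF fT f_mono] by (simp add: Pi_iff)

lemma openin_atLeastLessThan_unit_interval: "openin (top_of_set {0..1::real}) {0..<1}"
proof -
  have "openin (top_of_set {0..1::real}) ({0..1} \<inter> {..<1})"
    by (rule openin_open_Int) simp
  moreover have "{0..1::real} \<inter> {..<1} = {0..<1}" by auto
  ultimately show ?thesis by simp
qed

lemma homotopic_with_le_down_topology:
  assumes fT: "\<And>x. x \<in> S \<Longrightarrow> f x \<in> T" and gT: "\<And>x. x \<in> S \<Longrightarrow> g x \<in> T"
    and f_mono: "\<And>x y. x \<in> S \<Longrightarrow> y \<in> S \<Longrightarrow> x \<subseteq> y \<Longrightarrow> f x \<subseteq> f y"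
    and g_mono: "\<And>x y. x \<in> S \<Longrightarrow> y \<in> S \<Longrightarrow> x \<subseteq> y \<Longrightarrow> g x \<subseteq> g y"
    and fg: "\<And>x. x \<in> S \<Longrightarrow> f x \<subseteq> g x"
    and "P f" and "P g"
  shows "homotopic_with P (down_topology S) (down_topology T) f g"
proof -
  define h where "h = (\<lambda>(t::real, x). if t < 1 then f x else g x)"
  let ?I = "top_of_set {0..1::real}"
  have "continuous_map (prod_topology ?I (down_topology S)) (down_topology T) h"
    unfolding continuous_map_def topspace_prod_topology topspace_down_topology
  proof (intro conjI allI impI)
    show "h \<in> topspace ?I \<times> S \<rightarrow> T"
      using fT gT by (auto simp: h_def)
    fix U assume "openin (down_topology T) U"
    hence U: "is_downset T U" by (simp add: openin_down_topology)
    have f_U: "f x \<in> U" if "x \<in> S" "g x \<in> U" for x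
      using U fT[OF that(1)] fg[OF that(1)] that(2) unfolding is_downset_def by blast
    have "{z \<in> topspace ?I \<times> S. h z \<in> U}
        = ({0..1} \<times> {x \<in> S. g x \<in> U}) \<union> ({0..<1} \<times> {x \<in> S. f x \<in> U})"
      using f_U by (auto simp: h_def split: if_splits)
    moreover have "openin (prod_topology ?I (down_topology S)) ({0..1} \<times> {x \<in> S. g x \<in> U})"
      using is_downset_preimage[of S g T, OF gT g_mono U]
      by (simp add: openin_prod_Times_iff openin_down_topology)
    moreover have "openin (prod_topology ?I (down_topology S)) ({0..<1} \<times> {x \<in> S. f x \<in> U})"
      using is_downset_preimage[of S f T, OF fT f_mono U] openin_atLeastLessThan_unit_interval
      by (simp add: openin_prod_Times_iff openin_down_topology)
    ultimately show "openin (prod_topology ?I (down_topology S)) {z \<in> topspace ?I \<times> S. h z \<in> U}"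
      by (simp add: openin_Un)
  qed
  moreover have "(\<lambda>x. h (t, x)) = (if t < 1 then f else g)" for t
    by (auto simp: h_def)
  ultimately show ?thesis
    unfolding homotopic_with_def using \<open>P f\<close> \<open>P g\<close>
    by (intro exI[of _ h]) (simp add: h_def)
qed

lemma sdr_with_closure_operator:
  assumes A_sub: "A \<subseteq> S" and rA: "\<And>x. x \<in> S \<Longrightarrow> r x \<in> A"
    and r_ge: "\<And>x. x \<in> S \<Longrightarrow> x \<subseteq> r x"
    and r_mono: "\<And>x y. x \<in> S \<Longrightarrow> y \<in> S \<Longrightarrow> x \<subseteq> y \<Longrightarrow> r x \<subseteq> r y"
    and r_fix: "\<And>a. a \<in> A \<Longrightarrow> r a = a" and "Q id" and "Q r"
  shows "sdr_with Q (down_topology S) A"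
proof -
  have rS: "\<And>x. x \<in> S \<Longrightarrow> r x \<in> S" using rA A_sub by blast
  have "continuous_map (down_topology S) (subtopology (down_topology S) A) r"
    by (rule continuous_map_into_subtopology[OF continuous_map_down_topology[of S r S, OF rS r_mono]])
      (use rA in auto)
  moreover have "homotopic_with (\<lambda>k. (\<forall>a\<in>A. k a = a) \<and> Q k) (down_topology S) (down_topology S) id r"
    using \<open>Q id\<close> \<open>Q r\<close> r_fix r_ge
    by (intro homotopic_with_le_down_topology[of S id S r, OF _ rS _ r_mono]) auto
  ultimately show ?thesis
    unfolding sdr_with_def using A_sub r_fix by auto
qed

lemma (in group) conj_act_eq_image: "conj_act G g H = (\<lambda>h. g \<otimes> h \<otimes> inv g) ` H"
  unfolding conj_act_def l_coset_def r_coset_def by auto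

lemma conj_act_mono: "H \<subseteq> K \<Longrightarrow> conj_act G g H \<subseteq> conj_act G g K"
  unfolding conj_act_def l_coset_def r_coset_def by blast

lemma (in group) subgroup_conj_act:
  "g \<in> carrier G \<Longrightarrow> subgroup H G \<Longrightarrow> subgroup (conj_act G g H) G"
  unfolding conj_act_def by (rule subgroup_conjugation_is_surj2)

lemma (in group) inj_on_conjugation: "g \<in> carrier G \<Longrightarrow> inj_on (\<lambda>h. g \<otimes> h \<otimes> inv g) (carrier G)"
  by (rule inj_onI) simp

lemma (in group) card_conj_act:
  assumes "g \<in> carrier G" and "H \<subseteq> carrier G"
  shows "card (conj_act G g H) = card H"
  unfolding conj_act_eq_image
  using card_image[OF inj_on_subset[OF inj_on_conjugation assms(2)]] assms(1) .

lemma (in group) conjugate_inv_conjugate: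
  "g \<in> carrier G \<Longrightarrow> h \<in> carrier G \<Longrightarrow> g \<otimes> (inv g \<otimes> h \<otimes> g) \<otimes> inv g = h"
  by (metis inv_closed m_assoc m_closed r_inv l_one r_one)

lemma (in group) conj_act_inv_conj_act:
  assumes "g \<in> carrier G" and "H \<subseteq> carrier G"
  shows "conj_act G g (conj_act G (inv g) H) = H"
proof -
  have "g \<otimes> (inv g \<otimes> h \<otimes> inv (inv g)) \<otimes> inv g = h" if "h \<in> H" for h
    using that assms by (simp add: conjugate_inv_conjugate subsetD)
  then show ?thesis
    unfolding conj_act_eq_image image_image by simp
qed

lemma (in group) sylow_subgroup_conj_act:
  "g \<in> carrier G \<Longrightarrow> sylow_subgroup G p S \<Longrightarrow> sylow_subgroup G p (conj_act G g S)"
  unfolding sylow_subgroup_def using subgroup_conj_act card_conj_act subgroup.subset by metis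

lemma (in group) mem_normalizer_iff:
  "H \<subseteq> carrier G \<Longrightarrow> x \<in> normalizer G H \<longleftrightarrow> x \<in> carrier G \<and> conj_act G x H = H"
  by (simp add: normalizer_def stabilizer_def conj_act_def)

lemma (in group_action) fixed_point_of_p_group:
  assumes "finite E" and "prime p" and "order G = p ^ n" and "\<not> p dvd card E"
  shows "\<exists>x\<in>E. \<forall>g\<in>carrier G. \<phi> g x = x"
proof (rule ccontr)
  assume no_fixed_point: "\<not> (\<exists>x\<in>E. \<forall>g\<in>carrier G. \<phi> g x = x)"
  have p_dvd_orbit: "p dvd card (orbit G \<phi> x)" if x: "x \<in> E" for x
  proof -
    have "card (orbit G \<phi> x) dvd p ^ n"
      using orbit_stabilizer_theorem[OF x] assms(3) by (metis dvd_triv_left)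
    then obtain i where i: "card (orbit G \<phi> x) = p ^ i"
      using divides_primepow_nat[OF \<open>prime p\<close>] by blast
    have "i \<noteq> 0"
    proof
      assume "i = 0"
      then obtain y where "orbit G \<phi> x = {y}"
        using i card_1_singletonE by auto
      moreover have "\<phi> g x \<in> orbit G \<phi> x" if "g \<in> carrier G" for g
        using that unfolding orbit_def by blast
      ultimately show False
        using no_fixed_point x orbit_refl[OF x] by auto
    qed
    then show ?thesis
      using i by simp
  qed
  have "card E = (\<Sum>orb\<in>orbits G E \<phi>. card orb)"
    using disjoint_sum[OF \<open>finite E\<close>, of "\<lambda>_. 1::nat"] by simp
  also have "p dvd \<dots>"
    using p_dvd_orbit by (auto simp: orbits_def intro!: dvd_sum)
  finally show False
    using assms(4) by simp
qed

lemma (in group) rcosets_mult_closed: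
  assumes "subgroup H G" "X \<in> rcosets H" "g \<in> carrier G"
  shows "X #> g \<in> rcosets H"
proof -
  obtain a where a: "a \<in> carrier G" "X = H #> a"
    using assms(2) unfolding RCOSETS_def by blast
  have "H \<subseteq> carrier G"
    using assms(1) subgroup.subset by blast
  then show ?thesis
    using a assms(3) by (simp add: coset_mult_assoc rcosetsI)
qed

lemma (in group) rcosets_action:
  assumes "subgroup H G"
  shows "group_action G (rcosets H) (\<lambda>g. \<lambda>X\<in>rcosets H. X #> inv g)"
proof -
  let ?\<phi> = "\<lambda>g. \<lambda>X\<in>rcosets H. X #> inv g"
  have coset_carrier: "X \<subseteq> carrier G" if "X \<in> rcosets H" for X
    using subgroup.rcosets_carrier[OF assms is_group that] .
  have mult_closed: "X #> g \<in> rcosets H" if "X \<in> rcosets H" "g \<in> carrier G" for X g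
    using rcosets_mult_closed[OF assms that] .
  have compose_eq: "?\<phi> g (?\<phi> h X) = X #> inv (g \<otimes> h)"
    if "g \<in> carrier G" "h \<in> carrier G" "X \<in> rcosets H" for g h X
    using that coset_carrier[OF that(3)] mult_closed[OF that(3)]
    by (simp add: coset_mult_assoc inv_mult_group)
  have action_bij: "?\<phi> g \<in> Bij (rcosets H)" if g: "g \<in> carrier G" for g
  proof -
    have "bij_betw (?\<phi> g) (rcosets H) (rcosets H)"
    proof (rule bij_betwI[where g = "?\<phi> (inv g)"])
      show "?\<phi> g \<in> rcosets H \<rightarrow> rcosets H" "?\<phi> (inv g) \<in> rcosets H \<rightarrow> rcosets H"
        using g mult_closed by auto
      fix X assume X: "X \<in> rcosets H"
      show "?\<phi> (inv g) (?\<phi> g X) = X" "?\<phi> g (?\<phi> (inv g) X) = X"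
        using compose_eq[of "inv g" g X] compose_eq[of g "inv g" X] g X coset_carrier[OF X]
        by simp_all
    qed
    then show ?thesis
      unfolding Bij_def by simp
  qed
  show ?thesis
    unfolding group_action_def group_hom_def group_hom_axioms_def
  proof (intro conjI is_group group_BijGroup homI)
    fix g assume "g \<in> carrier G"
    then show "?\<phi> g \<in> carrier (BijGroup (rcosets H))"
      using action_bij by (simp add: BijGroup_def)
  next
    fix g h assume g: "g \<in> carrier G" and h: "h \<in> carrier G"
    have "?\<phi> g \<otimes>\<^bsub>BijGroup (rcosets H)\<^esub> ?\<phi> h = compose (rcosets H) (?\<phi> g) (?\<phi> h)"
      using action_bij g h by (simp add: BijGroup_def)
    also have "\<dots> = ?\<phi> (g \<otimes> h)"
      unfolding compose_def
      by (rule restrict_ext) (simp add: g h mult_closed coset_carrier coset_mult_assoc inv_mult_group)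
    finally show "?\<phi> (g \<otimes> h) = ?\<phi> g \<otimes>\<^bsub>BijGroup (rcosets H)\<^esub> ?\<phi> h" ..
  qed
qed

lemma (in group) p_subgroup_conjugate_into:
  assumes "finite (carrier G)" and "prime p"
    and "subgroup Q G" and "card Q = p ^ n"
    and "subgroup S G" and "\<not> p dvd card (rcosets S)"
  shows "\<exists>x\<in>carrier G. \<forall>q\<in>Q. x \<otimes> q \<otimes> inv x \<in> S"
proof -
  interpret Q_action: group_action "G\<lparr>carrier := Q\<rparr>" "rcosets S" "\<lambda>g. \<lambda>X\<in>rcosets S. X #> inv g"
    using group_action.induced_action[OF rcosets_action[OF assms(5)] assms(3)] .
  have "finite (rcosets S)"
    using rcosets_subset_PowG[OF assms(5)] assms(1) by (meson finite_Pow_iff finite_subset)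
  then obtain X where X: "X \<in> rcosets S" and fixed: "\<And>q. q \<in> Q \<Longrightarrow> X #> inv q = X"
    using Q_action.fixed_point_of_p_group[of p n] assms by (auto simp: order_def)
  obtain a where a: "a \<in> carrier G" and X_eq: "X = S #> a"
    using X unfolding RCOSETS_def by blast
  have S_sub: "S \<subseteq> carrier G"
    using assms(5) subgroup.subset by blast
  have "a \<otimes> q \<otimes> inv a \<in> S" if q: "q \<in> Q" for q
  proof -
    have q_carrier: "q \<in> carrier G"
      using q assms(3) subgroup.subset by blast
    have "S #> (a \<otimes> q) = S #> a"
      using fixed[OF subgroup.m_inv_closed[OF assms(3) q]] a q_carrier S_sub
      by (simp add: X_eq coset_mult_assoc)
    then have "a \<otimes> q \<in> S #> a"
      using rcos_self[of "a \<otimes> q" S] a q_carrier assms(5) by simp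
    then show ?thesis
      using subgroup.rcos_module_imp[OF assms(5) is_group a] by simp
  qed
  then show ?thesis
    using a by blast
qed

lemma (in group) normal_p_subgroup_le_of_index_prime_to_p:
  assumes "finite (carrier G)" and "prime p"
    and "Q \<lhd> G" and "card Q = p ^ n"
    and "subgroup S G" and "\<not> p dvd card (rcosets S)"
  shows "Q \<subseteq> S"
proof
  fix q assume q: "q \<in> Q"
  obtain x where x: "x \<in> carrier G" and conj_x: "\<forall>q\<in>Q. x \<otimes> q \<otimes> inv x \<in> S"
    using p_subgroup_conjugate_into[OF assms(1,2) normal_imp_subgroup[OF assms(3)] assms(4-6)]
    by blast
  have q_carrier: "q \<in> carrier G"
    using q assms(3) normal_imp_subgroup subgroup.subset by blast
  have "x \<otimes> (inv x \<otimes> q \<otimes> x) \<otimes> inv x \<in> S"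
    using conj_x normal.inv_op_closed1[OF assms(3) x q] by blast
  moreover have "x \<otimes> (inv x \<otimes> q \<otimes> x) \<otimes> inv x = q"
    using conjugate_inv_conjugate[OF x q_carrier] .
  ultimately show "q \<in> S"
    by simp
qed

lemma (in group) not_dvd_index:
  assumes "subgroup S G" and "card S = p ^ k" and "\<not> p ^ Suc k dvd order G"
  shows "\<not> p dvd card (rcosets S)"
proof
  assume "p dvd card (rcosets S)"
  then have "p * p ^ k dvd card (rcosets S) * card S"
    using assms(2) by (simp add: mult_dvd_mono)
  then show False
    using lagrange[OF assms(1)] assms(3) by simp
qed

lemma (in group) card_subgroup_dvd:
  assumes "subgroup H G" and "subgroup K G" and "H \<subseteq> K"
  shows "card H dvd card K"
proof -
  interpret K: group "G\<lparr>carrier := K\<rparr>"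
    using subgroup_imp_group[OF assms(2)] .
  have "card (rcosets\<^bsub>G\<lparr>carrier := K\<rparr>\<^esub> H) * card H = card K"
    using K.lagrange[OF subgroup_incl[OF assms]] by (simp add: order_def)
  then show ?thesis
    by (metis dvd_triv_right)
qed

definition sylows_over :: "('a, 'b) monoid_scheme \<Rightarrow> nat \<Rightarrow> 'a set \<Rightarrow> 'a set set" where
  "sylows_over G p P = {S. sylow_subgroup G p S \<and> P \<subseteq> S}"

definition sylow_meet :: "('a, 'b) monoid_scheme \<Rightarrow> nat \<Rightarrow> 'a set \<Rightarrow> 'a set" where
  "sylow_meet G p P = \<Inter> (sylows_over G p P)"

lemma sylow_meet_ge: "P \<subseteq> sylow_meet G p P"
  unfolding sylow_meet_def sylows_over_def by blast

lemma sylow_meet_le: "S \<in> sylows_over G p P \<Longrightarrow> sylow_meet G p P \<subseteq> S"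
  unfolding sylow_meet_def by blast

lemma sylow_meet_mono: "P \<subseteq> Q \<Longrightarrow> sylow_meet G p P \<subseteq> sylow_meet G p Q"
  unfolding sylow_meet_def sylows_over_def by blast

lemma sylows_over_sylow_meet: "sylows_over G p (sylow_meet G p P) = sylows_over G p P"
  unfolding sylows_over_def sylow_meet_def by blast

lemma sylow_meet_idem: "sylow_meet G p (sylow_meet G p P) = sylow_meet G p P"
  by (metis sylow_meet_def sylows_over_sylow_meet)

lemma Sp_subgroup: "P \<in> Sp G p \<Longrightarrow> subgroup P G"
  by (simp add: Sp_def p_subgroup_def)

locale finite_group_prime = group G for G (structure) +
  fixes p :: nat
  assumes finite_carrier: "finite (carrier G)" and prime_p: "prime p"
begin

lemma not_dvd_Suc_multiplicity: "\<not> p ^ Suc (multiplicity p (order G)) dvd order G"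
proof -
  have "order G \<noteq> 0"
    using finite_carrier order_gt_0_iff_finite by auto
  moreover have "\<not> is_unit p"
    using prime_p not_prime_unit by blast
  ultimately show ?thesis
    using power_dvd_iff_le_multiplicity[of "order G" p "Suc (multiplicity p (order G))"] by simp
qed

lemma p_subgroup_le_sylow:
  assumes "p_subgroup G p P"
  shows "\<exists>S. sylow_subgroup G p S \<and> P \<subseteq> S"
proof -
  let ?m = "multiplicity p (order G)"
  obtain c where "order G = p ^ ?m * c"
    using multiplicity_dvd by blast
  then obtain S0 where S0: "subgroup S0 G" "card S0 = p ^ ?m"
    using sylow_thm[OF prime_p is_group _ finite_carrier] by blast
  have index: "\<not> p dvd card (rcosets S0)"
    using not_dvd_index[OF S0 not_dvd_Suc_multiplicity] .
  obtain n where "subgroup P G" "card P = p ^ n"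
    using assms unfolding p_subgroup_def by blast
  then obtain x where x: "x \<in> carrier G" and conj_x: "\<forall>q\<in>P. x \<otimes> q \<otimes> inv x \<in> S0"
    using p_subgroup_conjugate_into[OF finite_carrier prime_p _ _ S0(1) index] by blast
  have "P = conj_act G (inv x) (conj_act G x P)"
    using conj_act_inv_conj_act[of "inv x" P] x subgroup.subset[OF \<open>subgroup P G\<close>] by simp
  also have "\<dots> \<subseteq> conj_act G (inv x) S0"
    using conj_x by (intro conj_act_mono) (auto simp: conj_act_eq_image)
  finally show ?thesis
    using sylow_subgroup_conj_act[of "inv x" p S0] x S0 by (auto simp: sylow_subgroup_def)
qed

lemma sylows_over_nonempty: "P \<in> Sp G p \<Longrightarrow> sylows_over G p P \<noteq> {}"
  using p_subgroup_le_sylow by (auto simp: Sp_def sylows_over_def)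

lemma sylows_over_conj_act:
  assumes g: "g \<in> carrier G" and P: "P \<subseteq> carrier G"
  shows "sylows_over G p (conj_act G g P) = conj_act G g ` sylows_over G p P"
proof (intro equalityI subsetI)
  fix T assume "T \<in> sylows_over G p (conj_act G g P)"
  then have T: "sylow_subgroup G p T" "conj_act G g P \<subseteq> T"
    by (auto simp: sylows_over_def)
  have T_carrier: "T \<subseteq> carrier G"
    using T(1) subgroup.subset by (auto simp: sylow_subgroup_def)
  have "conj_act G (inv g) T \<in> sylows_over G p P"
    using sylow_subgroup_conj_act[of "inv g" p T] conj_act_mono[OF T(2), of G "inv g"]
      conj_act_inv_conj_act[of "inv g" P] g P T(1)
    by (auto simp: sylows_over_def)
  moreover have "T = conj_act G g (conj_act G (inv g) T)"
    using conj_act_inv_conj_act[OF g T_carrier] by simp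
  ultimately show "T \<in> conj_act G g ` sylows_over G p P"
    by blast
next
  fix T assume "T \<in> conj_act G g ` sylows_over G p P"
  then obtain S where "sylow_subgroup G p S" "P \<subseteq> S" "T = conj_act G g S"
    by (auto simp: sylows_over_def)
  then show "T \<in> sylows_over G p (conj_act G g P)"
    using sylow_subgroup_conj_act[OF g] conj_act_mono[of P S G g] by (simp add: sylows_over_def)
qed

lemma sylow_meet_conj_act:
  assumes g: "g \<in> carrier G" and P: "P \<in> Sp G p"
  shows "sylow_meet G p (conj_act G g P) = conj_act G g (sylow_meet G p P)"
proof -
  have P_carrier: "P \<subseteq> carrier G"
    using Sp_subgroup[OF P] subgroup.subset by blast
  obtain S0 where S0: "S0 \<in> sylows_over G p P"
    using sylows_over_nonempty[OF P] by blast
  have sylows_carrier: "\<forall>S\<in>sylows_over G p P. S \<subseteq> carrier G"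
    using subgroup.subset by (auto simp: sylows_over_def sylow_subgroup_def)
  have "sylow_meet G p (conj_act G g P) = (\<Inter>S\<in>sylows_over G p P. conj_act G g S)"
    unfolding sylow_meet_def sylows_over_conj_act[OF g P_carrier] by simp
  also have "\<dots> = (\<lambda>h. g \<otimes> h \<otimes> inv g) ` (\<Inter> (sylows_over G p P))"
    unfolding conj_act_eq_image
    using image_INT[OF inj_on_conjugation[OF g], of "sylows_over G p P" "\<lambda>S. S" S0] sylows_carrier S0
    by simp
  also have "\<dots> = conj_act G g (sylow_meet G p P)"
    unfolding sylow_meet_def conj_act_eq_image ..
  finally show ?thesis .
qed

lemma sylow_meet_p_subgroup:
  assumes P: "P \<in> Sp G p"
  shows "p_subgroup G p (sylow_meet G p P)"
proof -
  obtain S where S: "S \<in> sylows_over G p P"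
    using sylows_over_nonempty[OF P] by blast
  then have S_sylow: "subgroup S G" "card S = p ^ multiplicity p (order G)"
    by (auto simp: sylows_over_def sylow_subgroup_def)
  have meet_subgroup: "subgroup (sylow_meet G p P) G"
    unfolding sylow_meet_def using sylows_over_nonempty[OF P]
    by (intro subgroups_Inter) (auto simp: sylows_over_def sylow_subgroup_def)
  have "card (sylow_meet G p P) dvd p ^ multiplicity p (order G)"
    using card_subgroup_dvd[OF meet_subgroup S_sylow(1) sylow_meet_le[OF S]] S_sylow(2) by simp
  then have "\<exists>n. card (sylow_meet G p P) = p ^ n"
    using divides_primepow_nat[OF prime_p] by blast
  moreover have "finite (sylow_meet G p P)"
    using sylow_meet_le[OF S] subgroup.subset[OF S_sylow(1)] finite_carrier
    by (meson finite_subset)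
  ultimately show ?thesis
    unfolding p_subgroup_def using meet_subgroup by blast
qed

lemma sylow_meet_Sp:
  assumes P: "P \<in> Sp G p"
  shows "sylow_meet G p P \<in> Sp G p"
proof -
  have "P \<noteq> {\<one>}" and "\<one> \<in> P"
    using P Sp_subgroup[OF P] subgroup.one_closed by (auto simp: Sp_def)
  then have "sylow_meet G p P \<noteq> {\<one>}"
    using sylow_meet_ge[of P G p] by blast
  then show ?thesis
    using sylow_meet_p_subgroup[OF P] by (simp add: Sp_def)
qed

end

locale abelian_sylows = finite_group_prime +
  assumes sylow_commute:
    "sylow_subgroup G p S \<Longrightarrow> x \<in> S \<Longrightarrow> y \<in> S \<Longrightarrow> x \<otimes> y = y \<otimes> x"
begin

lemma sylows_over_le_normalizer:
  assumes S: "S \<in> sylows_over G p P" and P: "P \<subseteq> carrier G"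
  shows "S \<subseteq> normalizer G P"
proof
  fix s assume s: "s \<in> S"
  have S_sylow: "sylow_subgroup G p S" and "P \<subseteq> S"
    using S by (auto simp: sylows_over_def)
  have s_carrier: "s \<in> carrier G"
    using s S_sylow subgroup.subset by (auto simp: sylow_subgroup_def)
  have "s \<otimes> h \<otimes> inv s = h" if h: "h \<in> P" for h
  proof -
    have "s \<otimes> h = h \<otimes> s"
      using sylow_commute[OF S_sylow s] h \<open>P \<subseteq> S\<close> by blast
    then show ?thesis
      using s_carrier h P by (simp add: m_assoc subsetD)
  qed
  then have "conj_act G s P = P"
    unfolding conj_act_eq_image by simp
  then show "s \<in> normalizer G P"
    using mem_normalizer_iff[OF P] s_carrier by simp
qed

lemma normal_p_subgroup_of_normalizer_le_sylows_over:
  assumes P: "P \<in> Sp G p" and S: "S \<in> sylows_over G p P"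
    and Q: "p_subgroup G p Q" and Q_normal: "Q \<lhd> G\<lparr>carrier := normalizer G P\<rparr>"
  shows "Q \<subseteq> S"
proof -
  define N where "N = normalizer G P"
  have P_carrier: "P \<subseteq> carrier G"
    using Sp_subgroup[OF P] subgroup.subset by blast
  have N: "subgroup N G"
    unfolding N_def by (rule normalizer_imp_subgroup[OF P_carrier])
  interpret N: group "G\<lparr>carrier := N\<rparr>"
    using subgroup_imp_group[OF N] .
  have S_sylow: "subgroup S G" "card S = p ^ multiplicity p (order G)"
    using S by (auto simp: sylows_over_def sylow_subgroup_def)
  have S_sub: "subgroup S (G\<lparr>carrier := N\<rparr>)"
    using subgroup_incl[OF S_sylow(1) N] sylows_over_le_normalizer[OF S P_carrier] N_def by simp
  have "card N dvd order G"
    using lagrange[OF N] by (metis dvd_triv_right)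
  then have "\<not> p ^ Suc (multiplicity p (order G)) dvd order (G\<lparr>carrier := N\<rparr>)"
    using not_dvd_Suc_multiplicity dvd_trans by (auto simp: order_def)
  then have index: "\<not> p dvd card (rcosets\<^bsub>G\<lparr>carrier := N\<rparr>\<^esub> S)"
    using N.not_dvd_index[OF S_sub S_sylow(2)] by blast
  obtain n where "card Q = p ^ n"
    using Q by (auto simp: p_subgroup_def)
  moreover have "finite (carrier (G\<lparr>carrier := N\<rparr>))"
    using finite_carrier subgroup.subset[OF N] by (simp add: finite_subset)
  ultimately show ?thesis
    using N.normal_p_subgroup_le_of_index_prime_to_p[OF _ prime_p _ _ S_sub index]
      Q_normal N_def by blast
qed

lemma sylow_meet_normal_in_normalizer:
  assumes P: "P \<in> Sp G p"
  shows "sylow_meet G p P \<lhd> G\<lparr>carrier := normalizer G P\<rparr>"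
proof -
  define N where "N = normalizer G P"
  have P_carrier: "P \<subseteq> carrier G"
    using Sp_subgroup[OF P] subgroup.subset by blast
  have N: "subgroup N G"
    unfolding N_def by (rule normalizer_imp_subgroup[OF P_carrier])
  interpret N: group "G\<lparr>carrier := N\<rparr>"
    using subgroup_imp_group[OF N] .
  obtain S where S: "S \<in> sylows_over G p P"
    using sylows_over_nonempty[OF P] by blast
  have "subgroup (sylow_meet G p P) (G\<lparr>carrier := N\<rparr>)"
    using sylow_meet_p_subgroup[OF P] N sylow_meet_le[OF S] sylows_over_le_normalizer[OF S P_carrier]
    unfolding N_def p_subgroup_def by (blast intro: subgroup_incl)
  moreover have "x \<otimes> h \<otimes> inv x \<in> sylow_meet G p P"
    if x: "x \<in> N" and h: "h \<in> sylow_meet G p P" for x h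
  proof -
    have x_carrier: "x \<in> carrier G"
      using x subgroup.subset[OF N] by blast
    moreover have "conj_act G x P = P"
      using x mem_normalizer_iff[OF P_carrier] N_def by simp
    ultimately have "conj_act G x (sylow_meet G p P) = sylow_meet G p P"
      using sylow_meet_conj_act[OF x_carrier P, symmetric] by simp
    then show ?thesis
      using h unfolding conj_act_eq_image by blast
  qed
  ultimately show ?thesis
    unfolding N_def[symmetric] N.normal_inv_iff using m_inv_consistent[OF N] by simp
qed

lemma Op_normalizer_eq_sylow_meet:
  assumes P: "P \<in> Sp G p"
  shows "Op G p (normalizer G P) = sylow_meet G p P"
proof -
  have maximal: "Q \<subseteq> sylow_meet G p P"
    if "p_subgroup G p Q" "Q \<lhd> G\<lparr>carrier := normalizer G P\<rparr>" for Q
    using normal_p_subgroup_of_normalizer_le_sylows_over[OF P _ that] unfolding sylow_meet_def by blast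
  show ?thesis
    unfolding Op_def
  proof (rule the_equality)
    show "p_subgroup G p (sylow_meet G p P) \<and> sylow_meet G p P \<lhd> G\<lparr>carrier := normalizer G P\<rparr> \<and>
      (\<forall>Q. p_subgroup G p Q \<and> Q \<lhd> G\<lparr>carrier := normalizer G P\<rparr> \<longrightarrow> Q \<subseteq> sylow_meet G p P)"
      using sylow_meet_p_subgroup[OF P] sylow_meet_normal_in_normalizer[OF P] maximal by blast
    fix Q assume "p_subgroup G p Q \<and> Q \<lhd> G\<lparr>carrier := normalizer G P\<rparr> \<and>
      (\<forall>Q'. p_subgroup G p Q' \<and> Q' \<lhd> G\<lparr>carrier := normalizer G P\<rparr> \<longrightarrow> Q' \<subseteq> Q)"
    then show "Q = sylow_meet G p P"
      using sylow_meet_p_subgroup[OF P] sylow_meet_normal_in_normalizer[OF P] maximal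
      by (meson subset_antisym)
  qed
qed

lemma sylow_meet_Bp:
  assumes "P \<in> Sp G p"
  shows "sylow_meet G p P \<in> Bp G p"
proof -
  have "Op G p (normalizer G (sylow_meet G p P)) = sylow_meet G p P"
    using Op_normalizer_eq_sylow_meet[OF sylow_meet_Sp[OF assms]] sylow_meet_idem[of G p P] by simp
  then show ?thesis
    using sylow_meet_Sp[OF assms] by (simp add: Bp_def)
qed

lemma sylow_meet_Bp_eq: "P \<in> Bp G p \<Longrightarrow> sylow_meet G p P = P"
  using Op_normalizer_eq_sylow_meet unfolding Bp_def by (metis (mono_tags, lifting) mem_Collect_eq)

end

theorem proposition5p2:
  fixes G :: "('a, 'b) monoid_scheme" and p :: nat
  assumes "group G" and "finite (carrier G)" and "prime p" and "p dvd order G"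
    and "\<forall>P. sylow_subgroup G p P \<longrightarrow>
           (\<forall>x\<in>P. \<forall>y\<in>P. x \<otimes>\<^bsub>G\<^esub> y = y \<otimes>\<^bsub>G\<^esub> x)"
  shows "strong_deformation_retract (down_topology (Sp G p)) (Bp G p)
       \<and> equivariant_sdr G (down_topology (Sp G p)) (Bp G p)"
proof -
  interpret abelian_sylows G p
    using assms by (simp add: abelian_sylows_def abelian_sylows_axioms_def
      finite_group_prime_def finite_group_prime_axioms_def)
  have Bp_Sp: "Bp G p \<subseteq> Sp G p"
    by (auto simp: Bp_def)
  note retraction = sdr_with_closure_operator[OF Bp_Sp sylow_meet_Bp sylow_meet_ge sylow_meet_mono
      sylow_meet_Bp_eq]
  have "strong_deformation_retract (down_topology (Sp G p)) (Bp G p)"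
    unfolding strong_deformation_retract_def by (rule retraction) auto
  moreover have "equivariant_sdr G (down_topology (Sp G p)) (Bp G p)"
    unfolding equivariant_sdr_def topspace_down_topology
    by (rule retraction) (auto simp: sylow_meet_conj_act)
  ultimately show ?thesis ..
qed

end
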